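(* The set $\mathtt{SUR}$ of surjective cellular automata is dense in $\mathtt{CA}$ equipped with the pointwise topology. Equivalently: for every $c\in\mathtt{CA}$ and every finite set $X\subseteq\Sigma^\mathbb{Z}$ there is a surjective $d\in\mathtt{CA}$ with $d(x)_0=c(x)_0$ for all $x\in X$.
   Context: $\Sigma$ is a finite alphabet with $|\Sigma|\ge 2$, and $\Sigma^\mathbb{Z}$ carries the product (Cantor) topology. The shift $\sigma$ is $\sigma(x)_i=x_{i+1}$. A cellular automaton (CA) is a continuous map $c:\Sigma^\mathbb{Z}\to\Sigma^\mathbb{Z}$ with $c\circ\sigma=\sigma\circ c$; $\mathtt{CA}$ is the set of all CA, $\mathtt{SUR}\subseteq\mathtt{CA}$ the surjective ones. The pointwise topology on $\mathtt{CA}$ is generated by the subbase $U_x(a)=\{c\in\mathtt{CA}\mid c(x)_0=a\}$, $x\in\Sigma^\mathbb{Z}$, $a\in\Sigma$. *)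

theory Defs
  imports "HOL-Analysis.Analysis"
begin

definition cantor_top :: "(int \<Rightarrow> 'a) topology" where
  "cantor_top = product_topology (\<lambda>_. discrete_topology UNIV) UNIV"

definition shift :: "(int \<Rightarrow> 'a) \<Rightarrow> (int \<Rightarrow> 'a)" where
  "shift x = (\<lambda>i. x (i + 1))"

definition is_CA :: "((int \<Rightarrow> 'a) \<Rightarrow> (int \<Rightarrow> 'a)) \<Rightarrow> bool" where
  "is_CA c \<longleftrightarrow> continuous_map cantor_top cantor_top c \<and> c \<circ> shift = shift \<circ> c"

definition CA :: "((int \<Rightarrow> 'a) \<Rightarrow> (int \<Rightarrow> 'a)) set" where
  "CA = {c. is_CA c}"

definition SUR :: "((int \<Rightarrow> 'a) \<Rightarrow> (int \<Rightarrow> 'a)) set" where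
  "SUR = {c \<in> CA. surj c}"

definition U_sub :: "(int \<Rightarrow> 'a) \<Rightarrow> 'a \<Rightarrow> ((int \<Rightarrow> 'a) \<Rightarrow> (int \<Rightarrow> 'a)) set" where
  "U_sub x a = {c \<in> CA. c x 0 = a}"

definition pointwise_top :: "((int \<Rightarrow> 'a) \<Rightarrow> (int \<Rightarrow> 'a)) topology" where
  "pointwise_top = topology_generated_by {U_sub x a | x a. True}"

end

theory Submission
  imports Defs
begin

(*
  Every open set of the pointwise topology that contains c contains a whole
  cylinder {d \<in> CA. d x 0 = c x 0 for all x \<in> X} with X finite, so it suffices
  to find, for a finite set X of configurations, a surjective CA that agrees
  with c at coordinate 0 on X.  We build it as a sliding block code with local
  rule  G w = F (w (-r)) (w r) (H w),  where F is a ternary operation that is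
  bijective in each argument (addition modulo |\<Sigma>|) and H only reads the window
  (-r, r).  Choosing r so large that (-r, r) separates the points of X, H can be
  chosen so that G x = c x 0 on X (permutivity of F in its last argument).
  Permutivity of F in its first two arguments makes the global map surjective:
  a preimage of y is constructed by extending a finite block alternately to the
  right and to the left.
*)

section \<open>Sliding block codes are cellular automata\<close>

lemma openin_cylinder:
  assumes "finite J"
  shows "openin cantor_top {y. \<forall>j\<in>J. y j = x j}"
proof -
  have "{y. \<forall>j\<in>J. y j = x j} = PiE UNIV (\<lambda>j. if j \<in> J then {x j} else UNIV)"
    by (auto simp: PiE_iff split: if_splits)
  moreover have "finite {j. (if j \<in> J then {x j} else UNIV) \<noteq> (UNIV :: 'a set)}"
    by (rule finite_subset[OF _ assms]) auto
  ultimately show ?thesis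
    unfolding cantor_top_def by (simp add: openin_PiE_gen)
qed

lemma continuous_map_cantor_finitary:
  fixes f :: "(int \<Rightarrow> 'a) \<Rightarrow> (int \<Rightarrow> 'b)"
  assumes "\<And>i. \<exists>J. finite J \<and> (\<forall>x y. (\<forall>j\<in>J. x j = y j) \<longrightarrow> f x i = f y i)"
  shows "continuous_map cantor_top cantor_top f"
  unfolding cantor_top_def continuous_map_componentwise_UNIV
proof
  fix i
  obtain J where J: "finite J" "\<forall>x y. (\<forall>j\<in>J. x j = y j) \<longrightarrow> f x i = f y i"
    using assms by blast
  have "openin cantor_top {x. f x i \<in> U}" for U
    unfolding openin_subopen[of _ "{x. f x i \<in> U}"]
  proof
    fix x assume x: "x \<in> {x. f x i \<in> U}"
    have "f y i \<in> U" if "\<forall>j\<in>J. y j = x j" for y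
      using J(2) that x by (metis mem_Collect_eq)
    then have "{y. \<forall>j\<in>J. y j = x j} \<subseteq> {x. f x i \<in> U}"
      by blast
    then show "\<exists>T. openin cantor_top T \<and> x \<in> T \<and> T \<subseteq> {x. f x i \<in> U}"
      using openin_cylinder[OF J(1)] by blast
  qed
  then show "continuous_map (product_topology (\<lambda>_. discrete_topology UNIV) UNIV)
      (discrete_topology UNIV) (\<lambda>x. f x i)"
    by (simp add: continuous_map_def cantor_top_def)
qed

definition local_rule :: "int \<Rightarrow> ((int \<Rightarrow> 'a) \<Rightarrow> 'b) \<Rightarrow> bool" where
  "local_rule r G \<longleftrightarrow> (\<forall>x y. (\<forall>j. \<bar>j\<bar> \<le> r \<longrightarrow> x j = y j) \<longrightarrow> G x = G y)"

lemma local_ruleD: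
  assumes "local_rule r G" "\<And>j. \<bar>j\<bar> \<le> r \<Longrightarrow> x j = y j"
  shows "G x = G y"
  using assms unfolding local_rule_def by blast

definition global_map :: "((int \<Rightarrow> 'a) \<Rightarrow> 'b) \<Rightarrow> (int \<Rightarrow> 'a) \<Rightarrow> (int \<Rightarrow> 'b)" where
  "global_map G x = (\<lambda>i. G (\<lambda>j. x (i + j)))"

lemma global_map_is_CA:
  fixes G :: "(int \<Rightarrow> 'a) \<Rightarrow> 'a"
  assumes "local_rule r G"
  shows "global_map G \<in> CA"
proof -
  have "continuous_map cantor_top cantor_top (global_map G)"
  proof (rule continuous_map_cantor_finitary)
    fix i
    have "global_map G x i = global_map G y i" if "\<forall>j\<in>{i-r..i+r}. x j = y j" for x y
      unfolding global_map_def by (rule local_ruleD[OF assms]) (use that in \<open>auto simp: abs_le_iff\<close>)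
    then show "\<exists>J. finite J \<and> (\<forall>x y. (\<forall>j\<in>J. x j = y j) \<longrightarrow> global_map G x i = global_map G y i)"
      by blast
  qed
  moreover have "global_map G \<circ> shift = shift \<circ> global_map G"
    by (auto simp: fun_eq_iff global_map_def shift_def algebra_simps)
  ultimately show ?thesis
    by (simp add: CA_def is_CA_def)
qed

text \<open>On a finite alphabet, addition modulo its cardinality (transported along
  an enumeration) is a ternary operation that can be solved for each argument
  when the other two are fixed.\<close>

lemma exists_permutive_operation:
  obtains F :: "'a::finite \<Rightarrow> 'a \<Rightarrow> 'a \<Rightarrow> 'a"
  where "\<forall>v k t. \<exists>u. F u v k = t" "\<forall>u k t. \<exists>v. F u v k = t" "\<forall>u v t. \<exists>k. F u v k = t"
proof -
  define n where "n = int CARD('a)"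
  obtain e where e: "bij_betw e (UNIV :: 'a set) {0..<n}"
    using finite_same_card_bij[OF finite finite_atLeastLessThan_int, of "UNIV :: 'a set" 0 n]
    by (simp add: n_def) blast
  have range_e: "range e = {0..<n}" and inj_e: "inj e"
    using e by (auto simp: bij_betw_def)
  define F where "F u v k = inv_into UNIV e ((e u + e v + e k) mod n)" for u v k
  have solve_last: "\<exists>k. F u v k = t" for u v t
  proof -
    define k where "k = inv_into UNIV e ((e t - e u - e v) mod n)"
    have "(e t - e u - e v) mod n \<in> range e"
      using range_e by (simp add: n_def)
    then have "e k = (e t - e u - e v) mod n"
      by (simp add: k_def f_inv_into_f)
    then have "(e u + e v + e k) mod n = e t mod n"
      by (simp add: mod_add_right_eq)
    also have "\<dots> = e t"
      using range_e by (metis atLeastLessThan_iff mod_pos_pos_trivial rangeI)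
    finally have "F u v k = t"
      by (simp add: F_def inv_into_f_f[OF inj_e])
    then show ?thesis
      by blast
  qed
  text \<open>F is symmetric, so solvability in the last argument gives the others.\<close>
  have solve_first: "\<exists>u. F u v k = t" for v k t
  proof -
    obtain u where "F k v u = t"
      using solve_last by blast
    then have "F u v k = t"
      by (simp add: F_def ac_simps)
    then show ?thesis
      by blast
  qed
  have solve_middle: "\<exists>v. F u v k = t" for u k t
  proof -
    obtain v where "F u k v = t"
      using solve_last by blast
    then have "F u v k = t"
      by (simp add: F_def ac_simps)
    then show ?thesis
      by blast
  qed
  show thesis
    by (rule that[of F]) (simp_all add: solve_first solve_middle solve_last)
qed

section \<open>Bipermutive rules have surjective global maps\<close>

context
  fixes F :: "'a \<Rightarrow> 'a \<Rightarrow> 'b \<Rightarrow> 'a" and H :: "(int \<Rightarrow> 'a) \<Rightarrow> 'b" and r :: int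
  assumes radius_pos: "r \<ge> 1"
    and solve_left: "\<forall>v k t. \<exists>u. F u v k = t"
    and solve_right: "\<forall>u k t. \<exists>v. F u v k = t"
    and H_local: "local_rule (r - 1) H"
begin

text \<open>Finite approximations of a preimage of y: block k is meant on the interval
  [-r-k, r-1+k]; step k+1 chooses the value at r+k so that the output at k is
  y k, and the value at -r-1-k so that the output at -1-k is y (-1-k).  The
  values on the initial interval [-r, r-1] are arbitrary.\<close>

primrec preimage_block :: "(int \<Rightarrow> 'a) \<Rightarrow> nat \<Rightarrow> int \<Rightarrow> 'a" where
  "preimage_block y 0 = (\<lambda>_. undefined)"
| "preimage_block y (Suc k) = (let s = preimage_block y k in
     s(r + int k := SOME v. F (s (int k - r)) v (H (\<lambda>j. s (int k + j))) = y (int k),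
       -r - 1 - int k := SOME u. F u (s (r - 1 - int k)) (H (\<lambda>j. s (-1 - int k + j))) = y (-1 - int k)))"

lemma preimage_block_stable:
  assumes "-r - int k \<le> j" "j \<le> r - 1 + int k" "k \<le> k'"
  shows "preimage_block y k' j = preimage_block y k j"
  using assms(3)
proof (induction k' rule: dec_induct)
  case (step m)
  have "j \<noteq> r + int m" "j \<noteq> -r - 1 - int m"
    using assms step.hyps by auto
  then show ?case
    using step.IH by (simp add: Let_def)
qed simp

definition preimage :: "(int \<Rightarrow> 'a) \<Rightarrow> int \<Rightarrow> 'a" where
  "preimage y j = preimage_block y (nat \<bar>j\<bar> + 1) j"

lemma preimage_eq_block:
  assumes "-r - int k \<le> j" "j \<le> r - 1 + int k"
  shows "preimage y j = preimage_block y k j"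
proof -
  have "preimage y j = preimage_block y (max k (nat \<bar>j\<bar> + 1)) j"
    unfolding preimage_def by (rule preimage_block_stable[symmetric]) (use radius_pos in auto)
  also have "\<dots> = preimage_block y k j"
    by (rule preimage_block_stable) (use assms in auto)
  finally show ?thesis .
qed

lemma H_preimage_eq_block:
  assumes "-1 - int k \<le> i" "i \<le> int k"
  shows "H (\<lambda>j. preimage y (i + j)) = H (\<lambda>j. preimage_block y k (i + j))"
proof -
  have agree: "preimage y (i + j) = preimage_block y k (i + j)" if "\<bar>j\<bar> \<le> r - 1" for j
    by (rule preimage_eq_block) (use assms that in \<open>auto simp: abs_le_iff\<close>)
  show ?thesis
    by (rule local_ruleD[OF H_local]) (simp add: agree)
qed

text \<open>The limit has output y i at every position: at i = k \<ge> 0 this was arranged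
  in step k+1 by the choice at i + r, at i = -1-k by the choice at i - r.\<close>

lemma preimage_output_nonneg:
  assumes i: "i = int k"
  shows "F (preimage y (i - r)) (preimage y (i + r)) (H (\<lambda>j. preimage y (i + j))) = y i"
proof -
  let ?s = "preimage_block y k"
  have "r + i \<noteq> -r - 1 - int k"
    using radius_pos i by simp
  then have choice: "preimage_block y (Suc k) (r + i)
      = (SOME v. F (?s (i - r)) v (H (\<lambda>j. ?s (i + j))) = y i)"
    by (simp add: Let_def i)
  have "F (?s (i - r)) (preimage_block y (Suc k) (r + i)) (H (\<lambda>j. ?s (i + j))) = y i"
    unfolding choice by (rule someI_ex) (use solve_right in blast)
  moreover have "preimage y (i - r) = ?s (i - r)"
    by (rule preimage_eq_block) (use radius_pos i in auto)
  moreover have "preimage y (i + r) = preimage_block y (Suc k) (r + i)"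
    by (subst add.commute, rule preimage_eq_block) (use radius_pos i in auto)
  moreover have "H (\<lambda>j. preimage y (i + j)) = H (\<lambda>j. ?s (i + j))"
    by (rule H_preimage_eq_block) (use i in auto)
  ultimately show ?thesis
    by simp
qed

lemma preimage_output_neg:
  assumes i: "i = -1 - int k"
  shows "F (preimage y (i - r)) (preimage y (i + r)) (H (\<lambda>j. preimage y (i + j))) = y i"
proof -
  let ?s = "preimage_block y k"
  have left: "i - r = -r - 1 - int k" and right: "i + r = r - 1 - int k"
    using i by simp_all
  have choice: "preimage_block y (Suc k) (i - r)
      = (SOME u. F u (?s (r - 1 - int k)) (H (\<lambda>j. ?s (i + j))) = y i)"
    by (simp add: Let_def i left)
  have "F (preimage_block y (Suc k) (i - r)) (?s (r - 1 - int k)) (H (\<lambda>j. ?s (i + j))) = y i"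
    unfolding choice by (rule someI_ex) (use solve_left in blast)
  moreover have "preimage y (i - r) = preimage_block y (Suc k) (i - r)"
    by (rule preimage_eq_block) (use radius_pos left in auto)
  moreover have "preimage y (i + r) = ?s (r - 1 - int k)"
    unfolding right by (rule preimage_eq_block) (use radius_pos in auto)
  moreover have "H (\<lambda>j. preimage y (i + j)) = H (\<lambda>j. ?s (i + j))"
    by (rule H_preimage_eq_block) (use i in auto)
  ultimately show ?thesis
    by simp
qed

theorem bipermutive_global_map_surj:
  "surj (global_map (\<lambda>w. F (w (-r)) (w r) (H w)))"
proof (rule surjI)
  fix y :: "int \<Rightarrow> 'a"
  have "F (preimage y (i - r)) (preimage y (i + r)) (H (\<lambda>j. preimage y (i + j))) = y i" for i
  proof (cases "i \<ge> 0")
    case True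
    then show ?thesis
      by (intro preimage_output_nonneg[where k = "nat i"]) simp
  next
    case False
    then show ?thesis
      by (intro preimage_output_neg[where k = "nat (-i - 1)"]) simp
  qed
  then show "global_map (\<lambda>w. F (w (-r)) (w r) (H w)) (preimage y) = y"
    by (simp add: global_map_def fun_eq_iff)
qed

end

section \<open>Interpolating a finite set of values by a local rule\<close>

lemma finite_set_separated_by_window:
  fixes X :: "(int \<Rightarrow> 'a) set"
  assumes "finite X"
  obtains r :: int where "r \<ge> 1"
    and "\<And>x y. x \<in> X \<Longrightarrow> y \<in> X \<Longrightarrow> (\<forall>j. \<bar>j\<bar> < r \<longrightarrow> x j = y j) \<Longrightarrow> x = y"
proof -
  define witness where "witness x y = (SOME j. x j \<noteq> y j)" for x y :: "int \<Rightarrow> 'a"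
  have witness: "x (witness x y) \<noteq> y (witness x y)" if "x \<noteq> y" for x y
  proof -
    have "\<exists>j. x j \<noteq> y j"
      using that by (auto simp: fun_eq_iff)
    then show ?thesis
      unfolding witness_def by (rule someI_ex)
  qed
  define D where "D = (\<lambda>(x, y). witness x y) ` (X \<times> X)"
  have "finite D"
    using assms by (simp add: D_def)
  then obtain k where k: "abs ` D \<subseteq> {..<k}"
    using finite_int_iff_bounded by blast
  show thesis
  proof (rule that[of "max 1 k"])
    fix x y assume xy: "x \<in> X" "y \<in> X" and agree: "\<forall>j. \<bar>j\<bar> < max 1 k \<longrightarrow> x j = y j"
    show "x = y"
    proof (rule ccontr)
      assume "x \<noteq> y"
      have "witness x y \<in> D"
        unfolding D_def using xy by (intro image_eqI[of _ _ "(x, y)"]) simp_all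
      then have "\<bar>witness x y\<bar> < k"
        using k by blast
      then show False
        using agree witness[OF \<open>x \<noteq> y\<close>] by simp
    qed
  qed simp
qed

lemma local_rule_interpolation:
  fixes F :: "'a \<Rightarrow> 'a \<Rightarrow> 'b \<Rightarrow> 'a" and g :: "(int \<Rightarrow> 'a) \<Rightarrow> 'a"
  assumes "finite X" and solve_last: "\<forall>u v t. \<exists>k. F u v k = t"
  obtains r H where "r \<ge> 1" "local_rule (r - 1) H"
    and "\<And>x. x \<in> X \<Longrightarrow> F (x (-r)) (x r) (H x) = g x"
proof -
  obtain r :: int where r: "r \<ge> 1"
    and separated: "\<And>x y. x \<in> X \<Longrightarrow> y \<in> X \<Longrightarrow> (\<forall>j. \<bar>j\<bar> < r \<longrightarrow> x j = y j) \<Longrightarrow> x = y"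
    using finite_set_separated_by_window[OF assms(1)] by blast
  define W where "W = {j. \<bar>j\<bar> < r}"
  define point where "point w = (SOME x. x \<in> X \<and> restrict x W = w)" for w
  define H where "H w = (SOME k. F (point (restrict w W) (-r)) (point (restrict w W) r) k
                                  = g (point (restrict w W)))" for w
  have "local_rule (r - 1) H"
  proof (unfold local_rule_def, intro allI impI)
    fix x y :: "int \<Rightarrow> 'a" assume "\<forall>j. \<bar>j\<bar> \<le> r - 1 \<longrightarrow> x j = y j"
    then have "restrict x W = restrict y W"
      by (auto simp: W_def fun_eq_iff)
    then show "H x = H y"
      by (simp add: H_def)
  qed
  moreover have "F (x (-r)) (x r) (H x) = g x" if x: "x \<in> X" for x
  proof -
    have "point (restrict x W) \<in> X \<and> restrict (point (restrict x W)) W = restrict x W"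
      unfolding point_def by (rule someI[of _ x]) (use x in simp)
    then have point_x: "point (restrict x W) = x"
      using separated[OF _ x] by (metis (mono_tags, lifting) W_def mem_Collect_eq restrict_apply')
    have "\<exists>k. F (x (-r)) (x r) k = g x"
      using solve_last by blast
    then show ?thesis
      unfolding H_def point_x by (rule someI_ex)
  qed
  ultimately show thesis
    by (rule that[OF r])
qed

lemma surjective_CA_agreeing_on_finite_set:
  fixes c :: "(int \<Rightarrow> 'a::finite) \<Rightarrow> (int \<Rightarrow> 'a)"
  assumes "finite X"
  shows "\<exists>d\<in>SUR. \<forall>x\<in>X. d x 0 = c x 0"
proof -
  obtain F :: "'a \<Rightarrow> 'a \<Rightarrow> 'a \<Rightarrow> 'a"
    where solve_left: "\<forall>v k t. \<exists>u. F u v k = t" and solve_right: "\<forall>u k t. \<exists>v. F u v k = t"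
      and solve_last: "\<forall>u v t. \<exists>k. F u v k = t"
    by (rule exists_permutive_operation)
  obtain r H where r: "r \<ge> 1" and H_local: "local_rule (r - 1) H"
    and interpolates: "\<And>x. x \<in> X \<Longrightarrow> F (x (-r)) (x r) (H x) = c x 0"
    using local_rule_interpolation[OF assms solve_last, of "\<lambda>x. c x 0"] by blast
  define G where "G w = F (w (-r)) (w r) (H w)" for w
  have "local_rule r G"
    unfolding local_rule_def
  proof (intro allI impI)
    fix x y :: "int \<Rightarrow> 'a" assume agree: "\<forall>j. \<bar>j\<bar> \<le> r \<longrightarrow> x j = y j"
    then have "H x = H y"
      by (intro local_ruleD[OF H_local]) simp
    moreover have "x (-r) = y (-r)" "x r = y r"
      using agree r by simp_all
    ultimately show "G x = G y"
      by (simp add: G_def)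
  qed
  then have "global_map G \<in> CA"
    by (rule global_map_is_CA)
  moreover have "surj (global_map G)"
    unfolding G_def using r solve_left solve_right H_local by (rule bipermutive_global_map_surj)
  ultimately have "global_map G \<in> SUR"
    by (simp add: SUR_def)
  moreover have "global_map G x 0 = c x 0" if "x \<in> X" for x
    using interpolates[OF that] by (simp add: global_map_def G_def)
  ultimately show ?thesis
    by blast
qed

section \<open>The pointwise topology\<close>

text \<open>Every open set of the pointwise topology containing c contains a cylinder
  {d \<in> CA. d x 0 = c x 0 for x \<in> X} with X finite: the generated topology
  consists of unions of finite intersections of subbasic sets.\<close>

lemma pointwise_open_contains_cylinder:
  assumes "openin pointwise_top U" "c \<in> U"
  shows "\<exists>X. finite X \<and> {d \<in> CA. \<forall>x\<in>X. d x 0 = c x 0} \<subseteq> U"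
proof -
  have "generate_topology_on {U_sub x a |x a. True} U"
    using assms(1) unfolding pointwise_top_def by (rule openin_topology_generated_by)
  then show ?thesis
    using assms(2)
  proof (induction arbitrary: c rule: generate_topology_on.induct)
    case (Int A B)
    obtain XA where "finite XA" "{d \<in> CA. \<forall>x\<in>XA. d x 0 = c x 0} \<subseteq> A"
      using Int.IH(1) Int.prems by blast
    moreover obtain XB where "finite XB" "{d \<in> CA. \<forall>x\<in>XB. d x 0 = c x 0} \<subseteq> B"
      using Int.IH(2) Int.prems by blast
    ultimately have "finite (XA \<union> XB) \<and> {d \<in> CA. \<forall>x\<in>XA \<union> XB. d x 0 = c x 0} \<subseteq> A \<inter> B"
      by blast
    then show ?case
      by blast
  next
    case (UN K)
    then obtain A where "A \<in> K" "c \<in> A"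
      by auto
    moreover obtain X where "finite X" "{d \<in> CA. \<forall>x\<in>X. d x 0 = c x 0} \<subseteq> A"
      using UN.IH[OF \<open>A \<in> K\<close> \<open>c \<in> A\<close>] by blast
    ultimately show ?case
      by blast
  next
    case (Basis S)
    then obtain x a where S: "S = U_sub x a"
      by auto
    then have "{d \<in> CA. \<forall>x'\<in>{x}. d x' 0 = c x' 0} \<subseteq> S"
      using Basis.prems by (auto simp: U_sub_def)
    then show ?case
      by blast
  qed simp
qed

theorem proposition3p3:
  assumes "CARD('a::finite) \<ge> 2"
  shows "pointwise_top closure_of (SUR :: ((int \<Rightarrow> 'a) \<Rightarrow> (int \<Rightarrow> 'a)) set)
           = topspace (pointwise_top :: ((int \<Rightarrow> 'a) \<Rightarrow> (int \<Rightarrow> 'a)) topology)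
       \<and> (\<forall>c \<in> (CA :: ((int \<Rightarrow> 'a) \<Rightarrow> (int \<Rightarrow> 'a)) set). \<forall>X. finite X \<longrightarrow>
            (\<exists>d \<in> SUR. \<forall>x \<in> X. d x 0 = c x 0))"
proof
  show "\<forall>c \<in> (CA :: ((int \<Rightarrow> 'a) \<Rightarrow> (int \<Rightarrow> 'a)) set). \<forall>X. finite X \<longrightarrow>
            (\<exists>d \<in> SUR. \<forall>x \<in> X. d x 0 = c x 0)"
    using surjective_CA_agreeing_on_finite_set by blast
  show "pointwise_top closure_of (SUR :: ((int \<Rightarrow> 'a) \<Rightarrow> (int \<Rightarrow> 'a)) set) = topspace pointwise_top"
    unfolding dense_intersects_open
  proof (intro allI impI)
    fix U :: "((int \<Rightarrow> 'a) \<Rightarrow> (int \<Rightarrow> 'a)) set"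
    assume U: "openin pointwise_top U \<and> U \<noteq> {}"
    then obtain c where "c \<in> U"
      by blast
    then obtain X where "finite X" and cylinder: "{d \<in> CA. \<forall>x\<in>X. d x 0 = c x 0} \<subseteq> U"
      using pointwise_open_contains_cylinder U by blast
    then obtain d where "d \<in> SUR" "\<forall>x\<in>X. d x 0 = c x 0"
      using surjective_CA_agreeing_on_finite_set by blast
    then show "SUR \<inter> U \<noteq> {}"
      using cylinder by (auto simp: SUR_def)
  qed
qed

end
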